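(* In the setting of the addition algorithm, for every $\varphi\in\mathbb{R}^V$ with $M(\varphi)\le L(\tau,\varepsilon)$ we have $$\tau(v)-\tau'(v,r(\varphi,v))\le T^+(\varphi)_v-\varphi_v\le\tau(v)\quad\text{for all }v\in V.$$ Consequently (Corollary 2.4), for such $\varphi$, $\tau(v)-\varepsilon/2\le T^+(\varphi)_v-\varphi_v=\varphi_v-T^-(\varphi)_v\le\tau(v)$ for all $v\in V$.
   Context: Addition algorithm. Let $G=(V,E)$ be a finite connected graph ($v\sim w$ means $(v,w)\in E$), $\tau:V\to[0,\infty)$, $0<\varepsilon\le1/2$, and fix a total order $\preceq$ on $V$. Let $f:\mathbb{R}\to\mathbb{R}$ be $f(x)=0$ for $|x|\ge1$, $f(x)=(1+x)/\varepsilon$ on $[-1,-1+\varepsilon]$, $f(x)=1$ on $[-1+\varepsilon,1-\varepsilon]$, $f(x)=(1-x)/\varepsilon$ on $[1-\varepsilon,1]$. For $v\in V$, $h,t\in\mathbb{R}$ let $m_{v,h,t}(h')=\min(\tau(v)-t,\varepsilon/2)f(h'-h)+t$ if $\tau(v)\ge t$, and $m_{v,h,t}(h')=t$ if $\tau(v)<t$. On input $\varphi\in\mathbb{R}^V$ the algorithm outputs an ordering $P_1,\dots,P_{|V|}$ of $V$, numbers $s_k$ and functions $\tau_k:V\times\mathbb{R}\to\mathbb{R}$: set $\tau_1(v,h)=\tau(v)$; for $k=1,\dots,|V|$: let $P_k$ be the vertex $v\in V\setminus\{P_1,\dots,P_{k-1}\}$ minimizing $\tau_k(v,\varphi_v)$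 (ties broken by taking the $\preceq$-smallest); set $s_k=\tau_k(P_k,\varphi_{P_k})$; if $k<|V|$ set $\tau_{k+1}(v,h)=\tau_k(v,h)$ if $v\in\{P_1,\dots,P_k\}$ or $v\not\sim P_k$, and $\tau_{k+1}(v,h)=\min(\tau_k(v,h),m_{v,\varphi_{P_k},s_k}(h))$ otherwise. Define $T^+(\varphi)_{P_k}=\varphi_{P_k}+s_k$ ($1\le k\le|V|$) and $T^-(\varphi)=2\varphi-T^+(\varphi)$. Further notation: $d_G$ is graph distance; $\tau'(v,k):=\max\{\tau(v)-\tau(w):w\in V,\ d_G(v,w)\le k\}$ for integers $k\ge0$; $L(\tau,\varepsilon):=\sup\{k\ge0 \text{ integer}:\tau'(v,k)\le\varepsilon/2\ \forall v\in V\}-1$ (possibly $+\infty$). $\mathcal{E}(\varphi):=\{(v,w)\in E:|\varphi_v-\varphi_w|\ge1-\varepsilon\}$; $v\leftrightarrow w$ if $v$ and $w$ are connected by a path of edges of $\mathcal{E}(\varphi)$ (including $v=w$); $r(\varphi,v):=\max\{d_G(v,w):v\leftrightarrow w\}$ and $M(\varphi):=\max\{d_G(v,w):v\leftrightarrow w\}$ over all pairs. *)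

theory Defs
  imports Complex_Main "HOL-Library.Extended_Real"
begin

definition edge_rel :: "('a \<Rightarrow> 'a \<Rightarrow> bool) \<Rightarrow> ('a \<times> 'a) set" where
  "edge_rel E = {(x, y). E x y}"

definition finite_connected_graph :: "'a set \<Rightarrow> ('a \<Rightarrow> 'a \<Rightarrow> bool) \<Rightarrow> bool" where
  "finite_connected_graph V E \<longleftrightarrow> finite V \<and> V \<noteq> {} \<and>
     (\<forall>x y. E x y \<longrightarrow> x \<in> V \<and> y \<in> V) \<and>
     (\<forall>x y. E x y \<longrightarrow> E y x) \<and> (\<forall>x. \<not> E x x) \<and>
     (\<forall>x\<in>V. \<forall>y\<in>V. (x, y) \<in> (edge_rel E)\<^sup>*)"

definition gdist :: "('a \<Rightarrow> 'a \<Rightarrow> bool) \<Rightarrow> 'a \<Rightarrow> 'a \<Rightarrow> nat" where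
  "gdist E v w = (LEAST n. (v, w) \<in> edge_rel E ^^ n)"

definition total_order_on :: "'a set \<Rightarrow> ('a \<Rightarrow> 'a \<Rightarrow> bool) \<Rightarrow> bool" where
  "total_order_on V le \<longleftrightarrow>
     (\<forall>x\<in>V. le x x) \<and>
     (\<forall>x\<in>V. \<forall>y\<in>V. le x y \<and> le y x \<longrightarrow> x = y) \<and>
     (\<forall>x\<in>V. \<forall>y\<in>V. \<forall>z\<in>V. le x y \<and> le y z \<longrightarrow> le x z) \<and>
     (\<forall>x\<in>V. \<forall>y\<in>V. le x y \<or> le y x)"

definition ffun :: "real \<Rightarrow> real \<Rightarrow> real" where
  "ffun eps x =
     (if \<bar>x\<bar> \<ge> 1 then 0
      else if x \<le> -1 + eps then (1 + x) / eps
      else if x \<le> 1 - eps then 1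
      else (1 - x) / eps)"

definition mfun :: "('a \<Rightarrow> real) \<Rightarrow> real \<Rightarrow> 'a \<Rightarrow> real \<Rightarrow> real \<Rightarrow> real \<Rightarrow> real" where
  "mfun tau eps v h t h' =
     (if tau v \<ge> t then min (tau v - t) (eps / 2) * ffun eps (h' - h) + t else t)"

definition argsel :: "('a \<Rightarrow> 'a \<Rightarrow> bool) \<Rightarrow> 'a set \<Rightarrow> ('a \<Rightarrow> real) \<Rightarrow> 'a" where
  "argsel le R g = (THE v. v \<in> R \<and> (\<forall>w\<in>R. g v \<le> g w) \<and>
                          (\<forall>w\<in>R. g w = g v \<longrightarrow> le v w))"

text \<open>State after k steps: ([P_1..P_k], tau_{k+1}, [s_1..s_k]).\<close>
primrec addalg :: "'a set \<Rightarrow> ('a \<Rightarrow> 'a \<Rightarrow> bool) \<Rightarrow> ('a \<Rightarrow> 'a \<Rightarrow> bool) \<Rightarrow> ('a \<Rightarrow> real) \<Rightarrow> real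
     \<Rightarrow> ('a \<Rightarrow> real) \<Rightarrow> nat \<Rightarrow> 'a list \<times> ('a \<Rightarrow> real \<Rightarrow> real) \<times> real list" where
  "addalg V E le tau eps phi 0 = ([], (\<lambda>v h. tau v), [])"
| "addalg V E le tau eps phi (Suc k) =
     (case addalg V E le tau eps phi k of (Ps, tk, ss) \<Rightarrow>
       (let p = argsel le (V - set Ps) (\<lambda>v. tk v (phi v));
            s = tk p (phi p);
            Ps' = Ps @ [p]
        in (Ps',
            (\<lambda>v h. if v \<in> set Ps' \<or> \<not> E v p then tk v h
                   else min (tk v h) (mfun tau eps v (phi p) s h)),
            ss @ [s])))"

definition Tplus :: "'a set \<Rightarrow> ('a \<Rightarrow> 'a \<Rightarrow> bool) \<Rightarrow> ('a \<Rightarrow> 'a \<Rightarrow> bool) \<Rightarrow> ('a \<Rightarrow> real) \<Rightarrow> real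
     \<Rightarrow> ('a \<Rightarrow> real) \<Rightarrow> 'a \<Rightarrow> real" where
  "Tplus V E le tau eps phi v =
     (case addalg V E le tau eps phi (card V) of (Ps, _, ss) \<Rightarrow>
        phi v + the (map_of (zip Ps ss) v))"

definition Tminus :: "'a set \<Rightarrow> ('a \<Rightarrow> 'a \<Rightarrow> bool) \<Rightarrow> ('a \<Rightarrow> 'a \<Rightarrow> bool) \<Rightarrow> ('a \<Rightarrow> real) \<Rightarrow> real
     \<Rightarrow> ('a \<Rightarrow> real) \<Rightarrow> 'a \<Rightarrow> real" where
  "Tminus V E le tau eps phi v = 2 * phi v - Tplus V E le tau eps phi v"

definition tau' :: "'a set \<Rightarrow> ('a \<Rightarrow> 'a \<Rightarrow> bool) \<Rightarrow> ('a \<Rightarrow> real) \<Rightarrow> 'a \<Rightarrow> nat \<Rightarrow> real" where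
  "tau' V E tau v k = Max {tau v - tau w | w. w \<in> V \<and> gdist E v w \<le> k}"

definition Lbound :: "'a set \<Rightarrow> ('a \<Rightarrow> 'a \<Rightarrow> bool) \<Rightarrow> ('a \<Rightarrow> real) \<Rightarrow> real \<Rightarrow> ereal" where
  "Lbound V E tau eps =
     (SUP k\<in>{k::nat. \<forall>v\<in>V. tau' V E tau v k \<le> eps / 2}. ereal (real k)) - 1"

definition steep_edges :: "('a \<Rightarrow> 'a \<Rightarrow> bool) \<Rightarrow> real \<Rightarrow> ('a \<Rightarrow> real) \<Rightarrow> ('a \<times> 'a) set" where
  "steep_edges E eps phi = {(v, w). E v w \<and> \<bar>phi v - phi w\<bar> \<ge> 1 - eps}"

definition conn :: "('a \<Rightarrow> 'a \<Rightarrow> bool) \<Rightarrow> real \<Rightarrow> ('a \<Rightarrow> real) \<Rightarrow> 'a \<Rightarrow> 'a \<Rightarrow> bool" where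
  "conn E eps phi v w \<longleftrightarrow> (v, w) \<in> (steep_edges E eps phi)\<^sup>*"

definition rfun :: "'a set \<Rightarrow> ('a \<Rightarrow> 'a \<Rightarrow> bool) \<Rightarrow> real \<Rightarrow> ('a \<Rightarrow> real) \<Rightarrow> 'a \<Rightarrow> nat" where
  "rfun V E eps phi v = Max {gdist E v w | w. w \<in> V \<and> conn E eps phi v w}"

definition Mfun :: "'a set \<Rightarrow> ('a \<Rightarrow> 'a \<Rightarrow> bool) \<Rightarrow> real \<Rightarrow> ('a \<Rightarrow> real) \<Rightarrow> nat" where
  "Mfun V E eps phi = Max {gdist E v w | v w. v \<in> V \<and> w \<in> V \<and> conn E eps phi v w}"

end

theory Submission
  imports Defs
begin

(* For a vertex v let floor(v) be the minimum of tau over the steep cluster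
   of v, i.e. over all w with v <-> w.  We show that every threshold function tau_k of the
   addition algorithm satisfies  floor(v) <= tau_k(v, phi_v)  and  tau_k(v, h) <= tau(v).
   The upper bound is immediate since thresholds only decrease.  For the lower bound,
   when P_k = p is processed with s_k >= floor(p), a neighbour v receives the new cap
   m_{v,phi_p,s_k}(phi_v) >= s_k; if the edge vp is steep then floor(v) <= floor(p) <= s_k,
   and otherwise f(phi_v - phi_p) = 1 and, because p's floor is attained at distance
   <= M(phi) from p, hence <= M(phi)+1 from v, the hypothesis M(phi) <= L(tau, eps) gives
   tau(v) - s_k <= eps/2, so the cap equals tau(v).  Since s_k = tau_k(P_k, phi_{P_k}),
   every increment T^+(phi)_v - phi_v lies in [floor(v), tau(v)], and floor(v) is bounded
   below by tau(v) - tau'(v, r(phi,v)) and by tau(v) - eps/2.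
   The file develops: tie-breaking selection, graph distance, clusters and their floors,
   the functions f and m, the meaning of the bound L, the invariant, and the theorem. *)

lemma total_order_least_exists:
  assumes "total_order_on V le" "finite S" "S \<noteq> {}" "S \<subseteq> V"
  shows "\<exists>x\<in>S. \<forall>y\<in>S. le x y"
  using assms(2,3,4)
proof (induction S rule: finite_ne_induct)
  case (singleton x)
  then show ?case using assms(1) unfolding total_order_on_def by auto
next
  case (insert x F)
  then obtain y where y: "y \<in> F" "\<forall>z\<in>F. le y z" by auto
  show ?case
  proof (cases "le x y")
    case True
    then show ?thesis using y insert.prems assms(1) unfolding total_order_on_def
      by (metis insert_iff insert_subset subsetD)
  next
    case False
    then have "le y x" using y insert.prems assms(1) unfolding total_order_on_def
      by (metis insert_subset subsetD)
    then show ?thesis using y by auto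
  qed
qed

text \<open>The selection step of the algorithm is well defined: it returns a vertex of the
  remaining set (the minimiser with the tie-breaking order is unique).\<close>
lemma argsel_in:
  assumes tot: "total_order_on V le" and fin: "finite R" and ne: "R \<noteq> {}" and sub: "R \<subseteq> V"
  shows "argsel le R g \<in> R"
proof -
  define m where "m = Min (g ` R)"
  define S where "S = {v\<in>R. g v = m}"
  have "m \<in> g ` R" unfolding m_def using fin ne by auto
  then have "S \<noteq> {}" unfolding S_def by auto
  moreover have "finite S" using fin unfolding S_def by auto
  ultimately obtain x where x: "x \<in> S" "\<forall>y\<in>S. le x y"
    using total_order_least_exists[OF tot] sub unfolding S_def by blast
  let ?P = "\<lambda>v. v \<in> R \<and> (\<forall>w\<in>R. g v \<le> g w) \<and> (\<forall>w\<in>R. g w = g v \<longrightarrow> le v w)"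
  have Px: "?P x" using x fin unfolding S_def m_def by auto
  have unique: "v = x" if "?P v" for v
  proof -
    have "g v = g x" using that Px by (meson order_antisym)
    then have "le v x" "le x v" using that Px by auto
    moreover have "v \<in> V" "x \<in> V" using that Px sub by auto
    ultimately show ?thesis using tot unfolding total_order_on_def by metis
  qed
  have "?P (THE v. ?P v)" by (rule theI[of ?P x, OF Px unique])
  then show ?thesis unfolding argsel_def by blast
qed

lemma gdist_walk:
  assumes "finite_connected_graph V E" "p \<in> V" "w \<in> V"
  shows "(p, w) \<in> edge_rel E ^^ gdist E p w"
proof -
  have "(p, w) \<in> (edge_rel E)\<^sup>*" using assms unfolding finite_connected_graph_def by auto
  then obtain n where "(p, w) \<in> edge_rel E ^^ n" using rtrancl_power by blast
  then show ?thesis unfolding gdist_def by (rule LeastI)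
qed

lemma gdist_neighbour:
  assumes "finite_connected_graph V E" "p \<in> V" "w \<in> V" "E v p"
  shows "gdist E v w \<le> Suc (gdist E p w)"
proof -
  have "(v, p) \<in> edge_rel E" using assms(4) by (simp add: edge_rel_def)
  then have "(v, w) \<in> edge_rel E ^^ Suc (gdist E p w)"
    by (rule relpow_Suc_I2[OF _ gdist_walk[OF assms(1-3)]])
  then show ?thesis unfolding gdist_def by (rule Least_le)
qed

section \<open>Steep clusters and their floors\<close>

definition cluster :: "'a set \<Rightarrow> ('a \<Rightarrow> 'a \<Rightarrow> bool) \<Rightarrow> real \<Rightarrow> ('a \<Rightarrow> real) \<Rightarrow> 'a \<Rightarrow> 'a set" where
  "cluster V E eps phi v = {w\<in>V. conn E eps phi v w}"

text \<open>The floor of v: the least value of tau on the steep cluster of v.  It is the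
  lower bound for the increment at v that the algorithm guarantees.\<close>
definition cluster_floor :: "'a set \<Rightarrow> ('a \<Rightarrow> 'a \<Rightarrow> bool) \<Rightarrow> real \<Rightarrow> ('a \<Rightarrow> real) \<Rightarrow> ('a \<Rightarrow> real)
    \<Rightarrow> 'a \<Rightarrow> real" where
  "cluster_floor V E eps phi tau v = Min (tau ` cluster V E eps phi v)"

lemma cluster_finite_self:
  assumes "finite V" "v \<in> V"
  shows "finite (cluster V E eps phi v)" and "v \<in> cluster V E eps phi v"
  using assms by (auto simp: cluster_def conn_def)

lemma cluster_floor_le:
  assumes "finite V" "v \<in> V"
  shows "cluster_floor V E eps phi tau v \<le> tau v"
  using cluster_finite_self[OF assms] unfolding cluster_floor_def by auto

lemma cluster_floor_attained:
  assumes "finite V" "v \<in> V"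
  obtains w where "w \<in> V" "conn E eps phi v w" "cluster_floor V E eps phi tau v = tau w"
proof -
  have "Min (tau ` cluster V E eps phi v) \<in> tau ` cluster V E eps phi v"
    using cluster_finite_self[OF assms, of E eps phi] by (intro Min_in) auto
  then show ?thesis using that unfolding cluster_floor_def cluster_def by auto
qed

text \<open>Across a steep edge the cluster can only grow, so the floor can only drop.\<close>
lemma cluster_floor_steep_edge:
  assumes "finite V" "v \<in> V" "p \<in> V" "(v, p) \<in> steep_edges E eps phi"
  shows "cluster_floor V E eps phi tau v \<le> cluster_floor V E eps phi tau p"
proof -
  obtain w where w: "w \<in> V" "conn E eps phi p w" "cluster_floor V E eps phi tau p = tau w"
    using cluster_floor_attained[OF assms(1,3)] by blast
  have "conn E eps phi v w" using w(2) assms(4) unfolding conn_def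
    by (meson converse_rtrancl_into_rtrancl)
  then have "tau w \<in> tau ` cluster V E eps phi v" using w by (auto simp: cluster_def)
  then show ?thesis
    using w(3) cluster_finite_self[OF assms(1,2)] unfolding cluster_floor_def by simp
qed

lemma gdist_le_rfun:
  assumes "finite V" "w \<in> V" "conn E eps phi v w"
  shows "gdist E v w \<le> rfun V E eps phi v"
  unfolding rfun_def using assms by (intro Max_ge) auto

lemma gdist_le_Mfun:
  assumes "finite V" "v \<in> V" "w \<in> V" "conn E eps phi v w"
  shows "gdist E v w \<le> Mfun V E eps phi"
  unfolding Mfun_def
proof (rule Max_ge)
  have "{gdist E v w | v w. v \<in> V \<and> w \<in> V \<and> conn E eps phi v w}
          \<subseteq> (\<lambda>(v, w). gdist E v w) ` (V \<times> V)"
    by auto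
  then show "finite {gdist E v w | v w. v \<in> V \<and> w \<in> V \<and> conn E eps phi v w}"
    using assms(1) finite_subset by blast
qed (use assms in auto)

lemma ffun_nonneg:
  assumes "0 < eps" shows "0 \<le> ffun eps x"
proof -
  have "\<not> \<bar>x\<bar> \<ge> 1 \<Longrightarrow> 0 < 1 + x" "\<not> \<bar>x\<bar> \<ge> 1 \<Longrightarrow> 0 < 1 - x" by linarith+
  then show ?thesis using assms unfolding ffun_def by (auto intro: divide_nonneg_pos)
qed

lemma mfun_ge:
  assumes "0 < eps" shows "t \<le> mfun tau eps v h t h'"
proof (cases "t \<le> tau v")
  case True
  then have "0 \<le> min (tau v - t) (eps / 2) * ffun eps (h' - h)"
    using assms ffun_nonneg[OF assms] by simp
  then show ?thesis using True unfolding mfun_def by simp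
qed (simp add: mfun_def)

lemma mfun_plateau:
  assumes "0 < eps" "\<bar>h' - h\<bar> < 1 - eps" "t \<le> tau v" "tau v - t \<le> eps / 2"
  shows "mfun tau eps v h t h' = tau v"
proof -
  have "ffun eps (h' - h) = 1" using assms(1,2) unfolding ffun_def by auto
  then show ?thesis using assms(3,4) unfolding mfun_def by auto
qed

lemma tau'_ge:
  assumes "finite V" "w \<in> V" "gdist E v w \<le> k"
  shows "tau v - tau w \<le> tau' V E tau v k"
  unfolding tau'_def using assms by (intro Max_ge) auto

lemma Lbound_local_variation:
  assumes "finite V" "ereal (real n) \<le> Lbound V E tau eps"
    and "v \<in> V" "w \<in> V" "gdist E v w \<le> n + 1"
  shows "tau v - tau w \<le> eps / 2"
proof -
  define K where "K = {k::nat. \<forall>v\<in>V. tau' V E tau v k \<le> eps / 2}"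
  have "\<exists>k\<in>K. n + 1 \<le> k"
  proof (rule ccontr)
    assume "\<not> ?thesis"
    then have "(SUP k\<in>K. ereal (real k)) \<le> ereal (real n)" by (intro SUP_least) auto
    then have "(SUP k\<in>K. ereal (real k)) - 1 \<le> ereal (real n) - 1"
      by (simp add: ereal_minus_mono)
    then have "Lbound V E tau eps \<le> ereal (real n - 1)"
      unfolding Lbound_def K_def by (simp add: one_ereal_def)
    with assms(2) have "ereal (real n) \<le> ereal (real n - 1)" by (rule order_trans)
    then show False by simp
  qed
  then obtain k where k: "k \<in> K" "n + 1 \<le> k" by blast
  have "tau v - tau w \<le> tau' V E tau v k" using assms(5) k(2) by (intro tau'_ge[OF assms(1,4)]) auto
  also have "\<dots> \<le> eps / 2" using k(1) assms(3) unfolding K_def by auto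
  finally show ?thesis .
qed

section \<open>The invariant of the addition algorithm\<close>

text \<open>This is where the hypothesis
  that tau varies by at most eps/2 over distance M(phi)+1 enters.\<close>
lemma cap_above_floor:
  assumes G: "finite_connected_graph V E" and eps: "0 < eps"
    and flat: "\<forall>v\<in>V. \<forall>w\<in>V. gdist E v w \<le> Mfun V E eps phi + 1 \<longrightarrow> tau v - tau w \<le> eps / 2"
    and v: "v \<in> V" "E v p" and p: "p \<in> V"
    and s: "cluster_floor V E eps phi tau p \<le> s"
  shows "cluster_floor V E eps phi tau v \<le> mfun tau eps v (phi p) s (phi v)"
proof -
  have finV: "finite V" using G unfolding finite_connected_graph_def by auto
  have floor_v: "cluster_floor V E eps phi tau v \<le> tau v" by (rule cluster_floor_le[OF finV v(1)])
  have cap_ge: "s \<le> mfun tau eps v (phi p) s (phi v)" by (rule mfun_ge[OF eps])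
  consider "tau v < s" | "\<bar>phi v - phi p\<bar> \<ge> 1 - eps"
    | "s \<le> tau v" "\<bar>phi v - phi p\<bar> < 1 - eps" by linarith
  then show ?thesis
  proof cases
    case 1
    then show ?thesis using floor_v cap_ge by linarith
  next
    case 2
    then have "(v, p) \<in> steep_edges E eps phi" using v by (simp add: steep_edges_def)
    then have "cluster_floor V E eps phi tau v \<le> cluster_floor V E eps phi tau p"
      by (rule cluster_floor_steep_edge[OF finV v(1) p])
    then show ?thesis using s cap_ge by linarith
  next
    case 3
    obtain w where w: "w \<in> V" "conn E eps phi p w" "cluster_floor V E eps phi tau p = tau w"
      using cluster_floor_attained[OF finV p] by blast
    have "gdist E v w \<le> Suc (gdist E p w)" by (rule gdist_neighbour[OF G p w(1) v(2)])
    also have "\<dots> \<le> Mfun V E eps phi + 1" using gdist_le_Mfun[OF finV p w(1,2)] by simp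
    finally have "tau v - tau w \<le> eps / 2" using flat v(1) w(1) by blast
    then have "mfun tau eps v (phi p) s (phi v) = tau v"
      using 3 s w(3) by (intro mfun_plateau[OF eps]) auto
    then show ?thesis using floor_v by simp
  qed
qed

definition addalg_invariant :: "'a set \<Rightarrow> ('a \<Rightarrow> 'a \<Rightarrow> bool) \<Rightarrow> real \<Rightarrow> ('a \<Rightarrow> real) \<Rightarrow> ('a \<Rightarrow> real)
    \<Rightarrow> nat \<Rightarrow> 'a list \<times> ('a \<Rightarrow> real \<Rightarrow> real) \<times> real list \<Rightarrow> bool" where
  "addalg_invariant V E eps phi tau k st \<longleftrightarrow> (case st of (Ps, tk, ss) \<Rightarrow>
      length Ps = k \<and> length ss = k \<and> distinct Ps \<and> set Ps \<subseteq> V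
      \<and> (\<forall>v\<in>V. \<forall>h. tk v h \<le> tau v)
      \<and> (\<forall>v\<in>V. cluster_floor V E eps phi tau v \<le> tk v (phi v))
      \<and> (\<forall>i<k. cluster_floor V E eps phi tau (Ps!i) \<le> ss!i \<and> ss!i \<le> tau (Ps!i)))"

lemma addalg_invariant_step:
  assumes G: "finite_connected_graph V E" and eps: "0 < eps" and tot: "total_order_on V le"
    and flat: "\<forall>v\<in>V. \<forall>w\<in>V. gdist E v w \<le> Mfun V E eps phi + 1 \<longrightarrow> tau v - tau w \<le> eps / 2"
    and k: "k < card V"
    and inv: "addalg_invariant V E eps phi tau k (addalg V E le tau eps phi k)"
  shows "addalg_invariant V E eps phi tau (Suc k) (addalg V E le tau eps phi (Suc k))"
proof -
  have finV: "finite V" using G unfolding finite_connected_graph_def by auto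
  obtain Ps tk ss where eq: "addalg V E le tau eps phi k = (Ps, tk, ss)"
    by (cases "addalg V E le tau eps phi k") auto
  from inv have IH: "length Ps = k" "length ss = k" "distinct Ps" "set Ps \<subseteq> V"
      "\<forall>v\<in>V. \<forall>h. tk v h \<le> tau v"
      "\<forall>v\<in>V. cluster_floor V E eps phi tau v \<le> tk v (phi v)"
      "\<forall>i<k. cluster_floor V E eps phi tau (Ps!i) \<le> ss!i \<and> ss!i \<le> tau (Ps!i)"
    unfolding eq addalg_invariant_def by auto
  define p where "p = argsel le (V - set Ps) (\<lambda>v. tk v (phi v))"
  define s where "s = tk p (phi p)"
  define tk' where "tk' = (\<lambda>v h. if v \<in> set (Ps @ [p]) \<or> \<not> E v p then tk v h
                   else min (tk v h) (mfun tau eps v (phi p) s h))"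
  have next_state: "addalg V E le tau eps phi (Suc k) = (Ps @ [p], tk', ss @ [s])"
    using eq unfolding p_def s_def tk'_def by (simp add: Let_def)
  have "card (set Ps) = k" using IH(1,3) distinct_card by metis
  then have "\<not> V \<subseteq> set Ps" using k card_mono[OF finite_set] by fastforce
  then have p: "p \<in> V - set Ps" unfolding p_def using argsel_in[OF tot] finV by auto
  have s_bounds: "cluster_floor V E eps phi tau p \<le> s" "s \<le> tau p"
    using IH(5,6) p unfolding s_def by auto
  have upper: "\<forall>v\<in>V. \<forall>h. tk' v h \<le> tau v"
    using IH(5) unfolding tk'_def by (auto simp: min.coboundedI1)
  have lower: "\<forall>v\<in>V. cluster_floor V E eps phi tau v \<le> tk' v (phi v)"
    using IH(6) cap_above_floor[OF G eps flat _ _ _ s_bounds(1)] p unfolding tk'_def by auto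
  have recorded: "\<forall>i<Suc k. cluster_floor V E eps phi tau ((Ps @ [p]) ! i) \<le> (ss @ [s]) ! i
                       \<and> (ss @ [s]) ! i \<le> tau ((Ps @ [p]) ! i)"
    using IH(1,2,7) s_bounds by (auto simp: nth_append less_Suc_eq)
  show ?thesis
    unfolding next_state addalg_invariant_def using IH p upper lower recorded by auto
qed

lemma addalg_invariant:
  assumes G: "finite_connected_graph V E" and eps: "0 < eps" and tot: "total_order_on V le"
    and flat: "\<forall>v\<in>V. \<forall>w\<in>V. gdist E v w \<le> Mfun V E eps phi + 1 \<longrightarrow> tau v - tau w \<le> eps / 2"
  shows "k \<le> card V \<Longrightarrow> addalg_invariant V E eps phi tau k (addalg V E le tau eps phi k)"
proof (induction k)
  case 0
  have "finite V" using G unfolding finite_connected_graph_def by auto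
  then show ?case using cluster_floor_le unfolding addalg_invariant_def by auto
next
  case (Suc k)
  then show ?case using addalg_invariant_step[OF G eps tot flat] by simp
qed

lemma Tplus_increment_bounds:
  assumes G: "finite_connected_graph V E" and eps: "0 < eps" and tot: "total_order_on V le"
    and flat: "\<forall>v\<in>V. \<forall>w\<in>V. gdist E v w \<le> Mfun V E eps phi + 1 \<longrightarrow> tau v - tau w \<le> eps / 2"
    and v: "v \<in> V"
  shows "cluster_floor V E eps phi tau v \<le> Tplus V E le tau eps phi v - phi v"
    and "Tplus V E le tau eps phi v - phi v \<le> tau v"
proof -
  have finV: "finite V" using G unfolding finite_connected_graph_def by auto
  obtain Ps tk ss where eq: "addalg V E le tau eps phi (card V) = (Ps, tk, ss)"
    by (cases "addalg V E le tau eps phi (card V)") auto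
  from addalg_invariant[OF G eps tot flat, of "card V"] eq
  have I: "length Ps = card V" "length ss = card V" "distinct Ps" "set Ps \<subseteq> V"
      "\<forall>i<card V. cluster_floor V E eps phi tau (Ps!i) \<le> ss!i \<and> ss!i \<le> tau (Ps!i)"
    unfolding addalg_invariant_def by auto
  have "set Ps = V" using I finV by (metis card_subset_eq distinct_card)
  then obtain i where i: "i < card V" "Ps ! i = v" using I(1) v by (metis in_set_conv_nth)
  have "Tplus V E le tau eps phi v - phi v = ss ! i"
    unfolding Tplus_def eq using map_of_zip_nth[of Ps ss i] I i by auto
  then show "cluster_floor V E eps phi tau v \<le> Tplus V E le tau eps phi v - phi v"
    and "Tplus V E le tau eps phi v - phi v \<le> tau v"
    using I(5) i by auto
qed

theorem proposition2p3:
  fixes V :: "'a set" and E le :: "'a \<Rightarrow> 'a \<Rightarrow> bool"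
    and tau phi :: "'a \<Rightarrow> real" and eps :: real
  assumes "finite_connected_graph V E"
    and "\<forall>v\<in>V. tau v \<ge> 0"
    and "0 < eps" and "eps \<le> 1/2"
    and "total_order_on V le"
    and "ereal (real (Mfun V E eps phi)) \<le> Lbound V E tau eps"
  shows "\<forall>v\<in>V.
           tau v - tau' V E tau v (rfun V E eps phi v) \<le> Tplus V E le tau eps phi v - phi v
         \<and> Tplus V E le tau eps phi v - phi v \<le> tau v
         \<and> tau v - eps / 2 \<le> Tplus V E le tau eps phi v - phi v
         \<and> Tplus V E le tau eps phi v - phi v = phi v - Tminus V E le tau eps phi v"
proof
  fix v assume v: "v \<in> V"
  have finV: "finite V" using assms(1) unfolding finite_connected_graph_def by auto
  have flat: "\<forall>v\<in>V. \<forall>w\<in>V. gdist E v w \<le> Mfun V E eps phi + 1 \<longrightarrow> tau v - tau w \<le> eps / 2"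
    using Lbound_local_variation[OF finV assms(6)] by blast
  note bounds = Tplus_increment_bounds[OF assms(1,3,5) flat v]
  obtain w where w: "w \<in> V" "conn E eps phi v w" "cluster_floor V E eps phi tau v = tau w"
    using cluster_floor_attained[OF finV v] by blast
  have "tau v - tau w \<le> tau' V E tau v (rfun V E eps phi v)"
    using gdist_le_rfun[OF finV w(1,2)] by (rule tau'_ge[OF finV w(1)])
  moreover have "tau v - tau w \<le> eps / 2"
    using flat v w(1) gdist_le_Mfun[OF finV v w(1,2)] by simp
  ultimately show "tau v - tau' V E tau v (rfun V E eps phi v) \<le> Tplus V E le tau eps phi v - phi v
         \<and> Tplus V E le tau eps phi v - phi v \<le> tau v
         \<and> tau v - eps / 2 \<le> Tplus V E le tau eps phi v - phi v
         \<and> Tplus V E le tau eps phi v - phi v = phi v - Tminus V E le tau eps phi v"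
    using bounds w(3) unfolding Tminus_def by auto
qed

end
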